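(* Consider the algorithm AOA described in the context, under assumptions (A1)–(A3) for all rounds. For any interval $J=[i,j]\in\mathcal{I}$ and any comparators $\mathbf{u}_i,\ldots,\mathbf{u}_{j+1}\in\Omega$, \[ \sum_{t=i}^j f_t(\mathbf{w}_t)-\sum_{t=i}^j f_t(\mathbf{u}_t)\le\sqrt{3|J|c'(j)}+\frac{3G}{4}\sqrt{2|J|(7D^2+4DP_J)}+\frac{\sqrt{2|J|}}{4}\big[1+2\ln(k_J+1)\big], \] where $P_J=\sum_{t=i}^j\|\mathbf{u}_{t+1}-\mathbf{u}_t\|_2$, $k_J=\big\lfloor\tfrac12\log_2(1+\tfrac{4P_J}{7D})\big\rfloor+1$, and $c'(j)=1+\ln j+\ln(1+\log_2 j)+\ln\frac{5+3\ln(1+j)}{2}$.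
   Context: Online convex optimization: $\Omega\subseteq\mathbb{R}^d$ convex; in round $t=1,2,\ldots$ the learner plays $\mathbf{w}_t\in\Omega$, then a convex $f_t:\Omega\to\mathbb{R}$ is revealed. Assumptions: (A1) $\|\nabla f_t(\mathbf{w})\|_2\le G$ for all $\mathbf{w}\in\Omega$, $t$; (A2) $\mathbf{0}\in\Omega$ and the diameter of $\Omega$ is at most $D$; (A3) $0\le f_t\le1$ on $\Omega$. $\Pi_\Omega$ is Euclidean projection; online gradient descent (OGD) with step $\eta$ updates $\mathbf{v}\mapsto\Pi_\Omega[\mathbf{v}-\eta\nabla f_t(\mathbf{v})]$. Geometric covering intervals: $\mathcal{I}=\bigcup_{k\ge0}\mathcal{I}_k$, $\mathcal{I}_k=\{[i2^k,(i+1)2^k-1]: i=1,2,\ldots\}$. Ader with input length $L$: $N=\lceil\frac12\log_2(1+4L/7)\rceil+1$, step sizes $\eta_i=\frac{2^{i-1}D}{G}\sqrt{\frac7{2L}}$, $i=1,\ldots,N$, one OGD instance (arbitrary initial point) per $\eta_i$, initial weights $p_{1,\eta_i}=\frac{C}{i(i+1)}$ with $C=1+\frac1N$, play $\sum_ip_{t,\eta_i}\mathbf{w}_{t,\eta_i}$, update $p_{t+1,\eta}\propto p_{t,\eta}e^{-\alpha f_t(\mathbf{w}_{t,\eta})}$ (normalized) with $\alpha=\sqrt{8/L}$. Algorithm AOA: for each $J\in\mathcal{I}$ an expert $E_J$ runs Ader with input $|J|$ over rounds $t\in J$, producing $\mathbf{w}_{t,J}$; active experts $\mathcal{A}_t=\{E_J:J\in\mathcal{I},t\in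 J\}$. Combination by AdaNormalHedge: $\Phi(R,C)=\exp([R]_+^2/(3C))$, $\Phi(0,0)=1$, $w(R,C)=\tfrac12(\Phi(R+1,C+1)-\Phi(R-1,C+1))$, $R_{t-1,J}=\sum_{u=\min J}^{t-1}(f_u(\mathbf{w}_u)-f_u(\mathbf{w}_{u,J}))$, $C_{t-1,J}=\sum_{u=\min J}^{t-1}|f_u(\mathbf{w}_u)-f_u(\mathbf{w}_{u,J})|$, $p_{t,J}=w(R_{t-1,J},C_{t-1,J})/\sum_{E_{J'}\in\mathcal{A}_t}w(R_{t-1,J'},C_{t-1,J'})$, $\mathbf{w}_t=\sum_{E_J\in\mathcal{A}_t}p_{t,J}\mathbf{w}_{t,J}$. *)

theory Defs
  imports "HOL-Analysis.Analysis"
begin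

definition anh_Phi :: "real \<Rightarrow> real \<Rightarrow> real" where
  "anh_Phi R C = (if R = 0 \<and> C = 0 then 1 else exp ((max R 0)\<^sup>2 / (3 * C)))"

definition anh_w :: "real \<Rightarrow> real \<Rightarrow> real" where
  "anh_w R C = (anh_Phi (R + 1) (C + 1) - anh_Phi (R - 1) (C + 1)) / 2"

definition int_start :: "nat \<times> nat \<Rightarrow> nat" where
  "int_start J = snd J * 2 ^ fst J"

definition int_end :: "nat \<times> nat \<Rightarrow> nat" where
  "int_end J = (snd J + 1) * 2 ^ fst J - 1"

definition int_len :: "nat \<times> nat \<Rightarrow> nat" where
  "int_len J = 2 ^ fst J"

definition covering :: "(nat \<times> nat) set" where
  "covering = {(k, i). i \<ge> 1}"

definition active :: "nat \<Rightarrow> (nat \<times> nat) set" where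
  "active t = {J \<in> covering. int_start J \<le> t \<and> t \<le> int_end J}"

text \<open>ogd Om g eta x0 s n is the point played by OGD at round s + n when started at
  round s at the point x0; g is the gradient oracle.\<close>

fun ogd :: "'a::euclidean_space set \<Rightarrow> (nat \<Rightarrow> 'a \<Rightarrow> 'a) \<Rightarrow> real \<Rightarrow> 'a \<Rightarrow> nat \<Rightarrow> nat \<Rightarrow> 'a" where
  "ogd Om g eta x0 s 0 = x0"
| "ogd Om g eta x0 s (Suc n) =
     closest_point Om (ogd Om g eta x0 s n - eta *\<^sub>R g (s + n) (ogd Om g eta x0 s n))"

definition ader_N :: "real \<Rightarrow> nat" where
  "ader_N L = nat \<lceil>log 2 (1 + 4 * L / 7) / 2\<rceil> + 1"

definition ader_eta :: "real \<Rightarrow> real \<Rightarrow> real \<Rightarrow> nat \<Rightarrow> real" where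
  "ader_eta D G L m = 2 ^ (m - 1) * D / G * sqrt (7 / (2 * L))"

definition ader_alpha :: "real \<Rightarrow> real" where
  "ader_alpha L = sqrt (8 / L)"

text \<open>Weight of the m-th OGD instance (m = 1..N) at local round n (round s + n),
  for Ader with input length L started at round s with initial points x0 m.\<close>

fun ader_p :: "'a::euclidean_space set \<Rightarrow> (nat \<Rightarrow> 'a \<Rightarrow> 'a) \<Rightarrow> (nat \<Rightarrow> 'a \<Rightarrow> real)
    \<Rightarrow> real \<Rightarrow> real \<Rightarrow> real \<Rightarrow> (nat \<Rightarrow> 'a) \<Rightarrow> nat \<Rightarrow> nat \<Rightarrow> nat \<Rightarrow> real" where
  "ader_p Om g f D G L x0 s 0 m =
     (1 + 1 / real (ader_N L)) / (real m * (real m + 1))"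
| "ader_p Om g f D G L x0 s (Suc n) m =
     (let e = (\<lambda>m'. ader_p Om g f D G L x0 s n m' *
                 exp (- ader_alpha L * f (s + n) (ogd Om g (ader_eta D G L m') (x0 m') s n)))
      in e m / (\<Sum>m'=1..ader_N L. e m'))"

definition ader_out :: "'a::euclidean_space set \<Rightarrow> (nat \<Rightarrow> 'a \<Rightarrow> 'a) \<Rightarrow> (nat \<Rightarrow> 'a \<Rightarrow> real)
    \<Rightarrow> real \<Rightarrow> real \<Rightarrow> real \<Rightarrow> (nat \<Rightarrow> 'a) \<Rightarrow> nat \<Rightarrow> nat \<Rightarrow> 'a" where
  "ader_out Om g f D G L x0 s n =
     (\<Sum>m=1..ader_N L. ader_p Om g f D G L x0 s n m *\<^sub>R ogd Om g (ader_eta D G L m) (x0 m) s n)"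

text \<open>Expert E_J: Ader with input |J| run over the rounds of J; X0 J m is the
  (arbitrary) initial point of its m-th OGD instance.  Output at round t in J.\<close>

definition expert_out :: "'a::euclidean_space set \<Rightarrow> (nat \<Rightarrow> 'a \<Rightarrow> 'a) \<Rightarrow> (nat \<Rightarrow> 'a \<Rightarrow> real)
    \<Rightarrow> real \<Rightarrow> real \<Rightarrow> (nat \<times> nat \<Rightarrow> nat \<Rightarrow> 'a) \<Rightarrow> nat \<Rightarrow> nat \<times> nat \<Rightarrow> 'a" where
  "expert_out Om g f D G X0 t J =
     ader_out Om g f D G (real (int_len J)) (X0 J) (int_start J) (t - int_start J)"

text \<open>E t J is the output of expert J at round t; w u is the learner's play at round u < t.\<close>

definition aoa_R :: "(nat \<Rightarrow> 'a \<Rightarrow> real) \<Rightarrow> (nat \<Rightarrow> nat \<times> nat \<Rightarrow> 'a) \<Rightarrow> (nat \<Rightarrow> 'a)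
    \<Rightarrow> nat \<Rightarrow> nat \<times> nat \<Rightarrow> real" where
  "aoa_R f E w t J = (\<Sum>u\<in>{int_start J..<t}. f u (w u) - f u (E u J))"

definition aoa_C :: "(nat \<Rightarrow> 'a \<Rightarrow> real) \<Rightarrow> (nat \<Rightarrow> nat \<times> nat \<Rightarrow> 'a) \<Rightarrow> (nat \<Rightarrow> 'a)
    \<Rightarrow> nat \<Rightarrow> nat \<times> nat \<Rightarrow> real" where
  "aoa_C f E w t J = (\<Sum>u\<in>{int_start J..<t}. \<bar>f u (w u) - f u (E u J)\<bar>)"

definition aoa_play :: "(nat \<Rightarrow> 'a::real_vector \<Rightarrow> real) \<Rightarrow> (nat \<Rightarrow> nat \<times> nat \<Rightarrow> 'a) \<Rightarrow> (nat \<Rightarrow> 'a)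
    \<Rightarrow> nat \<Rightarrow> 'a" where
  "aoa_play f E w t =
     (let wt = (\<lambda>J. anh_w (aoa_R f E w t J) (aoa_C f E w t J));
          Z = (\<Sum>J\<in>active t. wt J)
      in (\<Sum>J\<in>active t. (wt J / Z) *\<^sub>R E t J))"

text \<open>aoa_hist f E n = [w_1, ..., w_n].\<close>

fun aoa_hist :: "(nat \<Rightarrow> 'a::real_vector \<Rightarrow> real) \<Rightarrow> (nat \<Rightarrow> nat \<times> nat \<Rightarrow> 'a) \<Rightarrow> nat \<Rightarrow> 'a list" where
  "aoa_hist f E 0 = []"
| "aoa_hist f E (Suc n) =
     (let h = aoa_hist f E n in h @ [aoa_play f E (\<lambda>u. h ! (u - 1)) (Suc n)])"

definition aoa :: "'a::euclidean_space set \<Rightarrow> (nat \<Rightarrow> 'a \<Rightarrow> 'a) \<Rightarrow> (nat \<Rightarrow> 'a \<Rightarrow> real)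
    \<Rightarrow> real \<Rightarrow> real \<Rightarrow> (nat \<times> nat \<Rightarrow> nat \<Rightarrow> 'a) \<Rightarrow> nat \<Rightarrow> 'a" where
  "aoa Om g f D G X0 t = aoa_hist f (expert_out Om g f D G X0) t ! (t - 1)"

end

theory Submission
  imports Defs "HOL-Probability.Hoeffding"
begin

text \<open>
  Each expert \<open>E\<^sub>J\<close> is Ader run on \<open>J\<close>. Its dynamic regret splits into the regret of
  Ader's exponential weights against its best OGD instance, bounded via Hoeffding's lemma, plus
  the dynamic regret of that instance; the geometric grid of step sizes contains one within a
  factor 2 of the step size that is optimal for the path length \<open>P\<^sub>J\<close>.

  For the meta-algorithm, the potential \<open>\<Phi>(R, C) - 3/2 anh_G(C)\<close> of AdaNormalHedge, summed over
  all experts started so far, never increases, since the weighted instantaneous regret of the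
  combined play is nonpositive by Jensen's inequality. Hence \<open>\<Phi>(R\<^sub>J, C\<^sub>J)\<close> is bounded
  by the number of such experts, \<open>O(j log j)\<close>, times \<open>O(log j)\<close>, and inverting \<open>\<Phi>\<close> gives
  \<open>R\<^sub>J \<le> sqrt (3 |J| c'(j))\<close>.
\<close>

section \<open>The AdaNormalHedge potential\<close>

lemma anh_Phi_eq: "anh_Phi R C = exp ((max R 0)\<^sup>2 / (3 * C))"
  by (simp add: anh_Phi_def)

lemma anh_Phi_ge_1: "0 \<le> C \<Longrightarrow> 1 \<le> anh_Phi R C"
  by (simp add: anh_Phi_eq)

lemma anh_w_nonneg:
  assumes "0 \<le> C"
  shows "0 \<le> anh_w R C"
proof -
  have "(max (R - 1) 0)\<^sup>2 \<le> (max (R + 1) 0)\<^sup>2"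
    by (intro power_mono) auto
  with assms show ?thesis
    by (simp add: anh_w_def anh_Phi_eq divide_right_mono)
qed

lemma cosh_le_exp_half_sq: "cosh (y::real) \<le> exp (y\<^sup>2 / 2)"
proof -
  have "-\<bar>2 * y\<bar> * (1/2) + ln (1 + (1/2) * (exp \<bar>2 * y\<bar> - 1)) \<le> \<bar>2 * y\<bar>\<^sup>2 / 8"
    by (rule Hoeffdings_lemma_aux) auto
  moreover have "1 + (1/2) * (exp \<bar>2 * y\<bar> - 1) = exp \<bar>y\<bar> * cosh y"
    by (cases "y \<ge> 0") (auto simp: cosh_def field_simps simp flip: exp_add exp_diff)
  ultimately have "ln (cosh y) \<le> y\<^sup>2 / 2"
    by (simp add: ln_mult cosh_real_pos power2_eq_square)
  then show ?thesis
    by (metis cosh_real_pos exp_le_cancel_iff exp_ln)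
qed

lemma exp_le_exp_add_of_diff_le:
  fixes E F \<delta> :: real
  assumes "E \<le> 1" "E - F \<le> \<delta>" "0 \<le> \<delta>"
  shows "exp E \<le> exp F + 3 * \<delta>"
proof (cases "E \<le> F")
  case True
  then have "exp E \<le> exp F" by simp
  with assms(3) show ?thesis by linarith
next
  case False
  have "exp E - exp F = exp E * (1 - exp (F - E))"
    by (simp add: algebra_simps flip: exp_add)
  also have "\<dots> \<le> exp E * (E - F)"
  proof -
    have "1 - exp (F - E) \<le> E - F"
      using exp_ge_add_one_self[of "F - E"] by linarith
    then show ?thesis by (intro mult_left_mono) auto
  qed
  also have "\<dots> \<le> 3 * \<delta>"
    using False assms exp_le order_trans[OF _ exp_le]
    by (intro mult_mono) auto
  finally show ?thesis by simp
qed

lemma anh_Phi_avg_le_nonpos: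
  assumes "0 \<le> C" "R \<le> 0" "- R \<le> C"
  shows "(anh_Phi (R + 1) (C + 1) + anh_Phi (R - 1) (C + 1)) / 2 \<le> anh_Phi R C + 3 / (2 * (C + 1))"
proof -
  have "(max (R + 1) 0)\<^sup>2 \<le> 1"
    using assms by (auto simp: max_def power_le_one)
  then have "anh_Phi (R + 1) (C + 1) \<le> exp (1 / (3 * (C + 1)))"
    using assms(1) by (simp add: anh_Phi_eq divide_right_mono)
  also have "\<dots> \<le> 1 + 2 * (1 / (3 * (C + 1)))"
    using exp_bound_lemma[of "1 / (3 * (C + 1))"] assms(1) by simp
  also have "\<dots> \<le> 1 + 2 * (3 / (2 * (C + 1)))"
    using assms(1) by (simp add: field_simps)
  finally have "anh_Phi (R + 1) (C + 1) \<le> 1 + 2 * (3 / (2 * (C + 1)))" .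
  moreover have "anh_Phi (R - 1) (C + 1) = 1" "anh_Phi R C = 1"
    using assms by (simp_all add: anh_Phi_eq max_def)
  ultimately show ?thesis
    by (simp add: field_simps)
qed

lemma anh_Phi_avg_le_exp:
  assumes "0 < R" "0 < a"
  shows "(anh_Phi (R + 1) a + anh_Phi (R - 1) a) / 2
    \<le> exp ((R\<^sup>2 + 1) / (3 * a) + 2 * R\<^sup>2 / (9 * a\<^sup>2))"
proof -
  have sq_plus: "(R + 1)\<^sup>2 / (3 * a) = (R\<^sup>2 + 1) / (3 * a) + 2 * R / (3 * a)"
    and sq_minus: "(R - 1)\<^sup>2 / (3 * a) = (R\<^sup>2 + 1) / (3 * a) + - (2 * R / (3 * a))"
    using assms by (simp_all add: field_simps power2_eq_square)
  have "(max (R - 1) 0)\<^sup>2 \<le> (R - 1)\<^sup>2"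
    by (auto simp: max_def)
  then have "anh_Phi (R - 1) a \<le> exp ((R - 1)\<^sup>2 / (3 * a))"
    using assms by (simp add: anh_Phi_eq divide_right_mono)
  moreover have "anh_Phi (R + 1) a = exp ((R + 1)\<^sup>2 / (3 * a))"
    using assms by (simp add: anh_Phi_eq max_def)
  moreover have "(exp ((R + 1)\<^sup>2 / (3 * a)) + exp ((R - 1)\<^sup>2 / (3 * a))) / 2
      = exp ((R\<^sup>2 + 1) / (3 * a)) * cosh (2 * R / (3 * a))"
    unfolding sq_plus sq_minus exp_add cosh_def by (simp add: field_simps)
  moreover have "\<dots> \<le> exp ((R\<^sup>2 + 1) / (3 * a)) * exp ((2 * R / (3 * a))\<^sup>2 / 2)"
    by (intro mult_left_mono cosh_le_exp_half_sq) auto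
  moreover have "\<dots> = exp ((R\<^sup>2 + 1) / (3 * a) + 2 * R\<^sup>2 / (9 * a\<^sup>2))"
    by (simp add: power2_eq_square flip: exp_add)
  ultimately show ?thesis
    by simp
qed

text \<open>For \<open>q = R\<^sup>2\<close> and \<open>a = C + 1\<close> the left-hand side bounds the average of
  \<open>\<Phi>(R \<plusminus> 1, C + 1)\<close>, and \<open>exp (q / (3 (a - 1))) = \<Phi>(R, C)\<close>.\<close>
lemma exp_sq_div_gap_le:
  fixes a q :: real
  assumes a: "1 < a" and q: "0 \<le> q"
  shows "exp ((q + 1) / (3 * a) + 2 * q / (9 * a\<^sup>2)) \<le> exp (q / (3 * (a - 1))) + 1 / a"
proof -
  define E where "E = (q + 1) / (3 * a) + 2 * q / (9 * a\<^sup>2)"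
  define F where "F = q / (3 * (a - 1))"
  have gap: "E - F = 1 / (3 * a) - q * (a + 2) / (9 * a\<^sup>2 * (a - 1))"
    using a by (simp add: E_def F_def field_simps power2_eq_square)
  have "exp E \<le> exp F + 3 * (1 / (3 * a))"
  proof (cases "q * (a + 2) < 3 * a * (a - 1)")
    case True
    have "q * (3 * a + 2) \<le> 3 * (q * (a + 2))"
      using q by (simp add: algebra_simps)
    moreover have "3 * a * (a - 1) = 3 * a\<^sup>2 - 3 * a"
      by (simp add: algebra_simps power2_eq_square)
    ultimately have "q * (3 * a + 2) + 3 * a \<le> 9 * a\<^sup>2"
      using True a by linarith
    moreover have "E = (q * (3 * a + 2) + 3 * a) / (9 * a\<^sup>2)"
      using a by (simp add: E_def field_simps power2_eq_square)
    ultimately have "E \<le> 1"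
      using a by simp
    moreover have "E - F \<le> 1 / (3 * a)"
      using gap a q by simp
    ultimately show ?thesis
      using a by (intro exp_le_exp_add_of_diff_le) auto
  next
    case False
    have "1 / (3 * a) = 3 * a * (a - 1) / (9 * a\<^sup>2 * (a - 1))"
      using a by (simp add: field_simps power2_eq_square)
    also have "\<dots> \<le> q * (a + 2) / (9 * a\<^sup>2 * (a - 1))"
      using False a by (intro divide_right_mono) auto
    finally have "exp E \<le> exp F"
      using gap by simp
    moreover have "0 \<le> 3 * (1 / (3 * a))"
      using a by simp
    ultimately show ?thesis
      by linarith
  qed
  then show ?thesis
    using a by (simp add: E_def F_def)
qed

lemma anh_Phi_avg_le_pos:
  assumes "0 < R" "0 < C"
  shows "(anh_Phi (R + 1) (C + 1) + anh_Phi (R - 1) (C + 1)) / 2 \<le> anh_Phi R C + 3 / (2 * (C + 1))"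
proof -
  have "(anh_Phi (R + 1) (C + 1) + anh_Phi (R - 1) (C + 1)) / 2
      \<le> exp (R\<^sup>2 / (3 * (C + 1 - 1))) + 1 / (C + 1)"
    using anh_Phi_avg_le_exp[of R "C + 1"] exp_sq_div_gap_le[of "C + 1" "R\<^sup>2"] assms by simp
  also have "\<dots> \<le> anh_Phi R C + 3 / (2 * (C + 1))"
    using assms by (simp add: anh_Phi_eq max_def field_simps)
  finally show ?thesis .
qed

lemma anh_Phi_avg_le:
  assumes "0 \<le> C" "\<bar>R\<bar> \<le> C"
  shows "(anh_Phi (R + 1) (C + 1) + anh_Phi (R - 1) (C + 1)) / 2 \<le> anh_Phi R C + 3 / (2 * (C + 1))"
  using assms anh_Phi_avg_le_nonpos[of C R] anh_Phi_avg_le_pos[of R C]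
  by (cases "R \<le> 0") auto

lemma sq_add_div_add_le:
  fixes x y p q :: real
  assumes "0 < p" "0 < q"
  shows "(x + y)\<^sup>2 / (p + q) \<le> x\<^sup>2 / p + y\<^sup>2 / q"
proof -
  have "(x + y)\<^sup>2 * (p * q) \<le> (x\<^sup>2 * q + y\<^sup>2 * p) * (p + q)"
    using zero_le_power2[of "x * q - y * p"] by (simp add: power2_eq_square algebra_simps)
  with assms show ?thesis by (simp add: field_simps)
qed

text \<open>Joint convexity of the perspective \<open>(x, c) \<mapsto> x\<^sup>2 / c\<close>, along the segment from
  \<open>(a, C)\<close> to \<open>(b, C + 1)\<close>.\<close>
lemma sq_div_convex_comb_le:
  fixes a b C s :: real
  assumes "0 \<le> C" "C = 0 \<Longrightarrow> a = 0" "0 \<le> s" "s \<le> 1"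
  shows "((1 - s) * a + s * b)\<^sup>2 / (C + s) \<le> (1 - s) * (a\<^sup>2 / C) + s * (b\<^sup>2 / (C + 1))"
proof -
  consider "s = 0" | "s = 1" | "C = 0" "0 < s" | "0 < C" "0 < s" "s < 1"
    using assms by linarith
  then show ?thesis
  proof cases
    case 4
    have "((1 - s) * a + s * b)\<^sup>2 / ((1 - s) * C + s * (C + 1))
        \<le> ((1 - s) * a)\<^sup>2 / ((1 - s) * C) + (s * b)\<^sup>2 / (s * (C + 1))"
      using 4 by (intro sq_add_div_add_le) auto
    also have "\<dots> = (1 - s) * (a\<^sup>2 / C) + s * (b\<^sup>2 / (C + 1))"
      using 4 by (simp add: power2_eq_square mult_ac)
    finally show ?thesis by (simp add: algebra_simps)
  qed (use assms in \<open>auto simp: power2_eq_square\<close>)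
qed

lemma anh_Phi_interpolate:
  assumes "0 \<le> C" "\<bar>R\<bar> \<le> C" "0 \<le> s" "s \<le> 1"
  shows "anh_Phi (R + s * \<sigma>) (C + s) \<le> (1 - s) * anh_Phi R C + s * anh_Phi (R + \<sigma>) (C + 1)"
proof -
  define x where "x = max R 0"
  define y where "y = max (R + \<sigma>) 0"
  have "max (R + s * \<sigma>) 0 \<le> (1 - s) * x + s * y"
  proof -
    have "(1 - s) * R \<le> (1 - s) * x" "s * (R + \<sigma>) \<le> s * y" "0 \<le> (1 - s) * x + s * y"
      using assms by (auto simp: x_def y_def intro: mult_left_mono)
    then show ?thesis by (simp add: algebra_simps)
  qed
  then have "(max (R + s * \<sigma>) 0)\<^sup>2 / (3 * (C + s)) \<le> ((1 - s) * x + s * y)\<^sup>2 / (3 * (C + s))"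
    using assms by (intro divide_right_mono power_mono) auto
  also have "\<dots> = ((1 - s) * x + s * y)\<^sup>2 / (C + s) / 3"
    by simp
  also have "\<dots> \<le> ((1 - s) * (x\<^sup>2 / C) + s * (y\<^sup>2 / (C + 1))) / 3"
    using assms by (intro divide_right_mono sq_div_convex_comb_le) (auto simp: x_def y_def)
  also have "\<dots> = (1 - s) * (x\<^sup>2 / (3 * C)) + s * (y\<^sup>2 / (3 * (C + 1)))"
    by (simp add: add_divide_distrib mult.commute[of 3])
  finally have "anh_Phi (R + s * \<sigma>) (C + s)
      \<le> exp ((1 - s) * (x\<^sup>2 / (3 * C)) + s * (y\<^sup>2 / (3 * (C + 1))))"
    by (simp add: anh_Phi_eq)
  also have "\<dots> \<le> (1 - s) * exp (x\<^sup>2 / (3 * C)) + s * exp (y\<^sup>2 / (3 * (C + 1)))"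
    using convex_onD[OF exp_convex, of s] assms by (simp del: times_divide_eq_right)
  finally show ?thesis
    by (simp add: anh_Phi_eq x_def y_def)
qed

lemma anh_Phi_step_le:
  assumes "0 \<le> C" "\<bar>R\<bar> \<le> C" "\<bar>r\<bar> \<le> 1"
  shows "anh_Phi (R + r) (C + \<bar>r\<bar>) \<le> anh_Phi R C + anh_w R C * r + 3 * \<bar>r\<bar> / (2 * (C + 1))"
proof -
  define \<sigma> :: real where "\<sigma> = (if 0 \<le> r then 1 else -1)"
  define avg where "avg = (anh_Phi (R + 1) (C + 1) + anh_Phi (R - 1) (C + 1)) / 2"
  have r: "\<bar>r\<bar> * \<sigma> = r"
    by (simp add: \<sigma>_def)
  have avg_w: "anh_Phi (R + \<sigma>) (C + 1) = avg + \<sigma> * anh_w R C"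
    by (auto simp: \<sigma>_def avg_def anh_w_def field_simps)
  have "anh_Phi (R + r) (C + \<bar>r\<bar>) \<le> (1 - \<bar>r\<bar>) * anh_Phi R C + \<bar>r\<bar> * anh_Phi (R + \<sigma>) (C + 1)"
    using anh_Phi_interpolate[OF assms(1,2), of "\<bar>r\<bar>" \<sigma>] assms(3) by (simp only: r)
  also have "\<dots> = anh_Phi R C + anh_w R C * (\<bar>r\<bar> * \<sigma>) + \<bar>r\<bar> * (avg - anh_Phi R C)"
    by (simp add: avg_w algebra_simps)
  also have "\<dots> \<le> anh_Phi R C + anh_w R C * r + \<bar>r\<bar> * (3 / (2 * (C + 1)))"
  proof -
    have "avg - anh_Phi R C \<le> 3 / (2 * (C + 1))"
      using anh_Phi_avg_le[OF assms(1,2)] unfolding avg_def by linarith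
    then show ?thesis
      unfolding r by (intro add_left_mono mult_left_mono) auto
  qed
  finally show ?thesis by (simp add: mult.commute)
qed

text \<open>\<open>anh_G\<close> is built so that \<open>anh_G C + x / (C + 1) \<le> anh_G (C + x)\<close>: it absorbs the
  second-order terms \<open>3 \<bar>r\<bar> / (2 (C + 1))\<close> of the potential increments.\<close>
definition anh_G :: "real \<Rightarrow> real" where
  "anh_G x = (if x \<le> 1 then x else 1 + ln x)"

lemma anh_G_add_le:
  assumes C: "0 \<le> C" and x: "0 \<le> x" "x \<le> 1"
  shows "anh_G C + x / (C + 1) \<le> anh_G (C + x)"
proof -
  consider "C + x \<le> 1" | "1 < C" | "C \<le> 1" "1 < C + x"
    by linarith
  then show ?thesis
  proof cases
    case 1
    moreover have "x / (C + 1) \<le> x"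
      using C x by (simp add: divide_le_eq mult_le_cancel_left1 mult_le_cancel_right1)
    ultimately show ?thesis
      using x by (simp add: anh_G_def)
  next
    case 2
    have "x / (C + x) \<le> - ln (C / (C + x))"
      using ln_le_minus_one[of "C / (C + x)"] 2 x by (simp add: field_simps)
    moreover have "x / (C + 1) \<le> x / (C + x)"
      using 2 x by (intro divide_left_mono) auto
    ultimately show ?thesis
      using 2 x by (simp add: anh_G_def ln_div)
  next
    case 3
    have "(C + x - 1) / (C + x) \<le> ln (C + x)"
      using ln_le_minus_one[of "1 / (C + x)"] 3 by (simp add: ln_div field_simps)
    moreover have "(C + x - 1) / (C + 1) \<le> (C + x - 1) / (C + x)"
      using 3 x by (intro divide_left_mono) auto
    moreover have "(1 - C) / (C + 1) \<le> (1 - C) / 1"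
      using 3 C by (intro divide_left_mono) auto
    moreover have "x / (C + 1) = (C + x - 1) / (C + 1) + (1 - C) / (C + 1)"
      by (simp add: add_divide_distrib [symmetric])
    ultimately show ?thesis
      using 3 by (simp add: anh_G_def)
  qed
qed

lemma anh_G_le:
  assumes "0 \<le> x"
  shows "anh_G x \<le> 1 + ln (1 + x)"
proof (cases "x \<le> 1")
  case True
  have "0 \<le> ln (1 + x)"
    using assms by simp
  with True show ?thesis
    by (simp add: anh_G_def)
qed (simp add: anh_G_def)

lemma le_sqrt_of_anh_Phi_le:
  assumes "\<bar>R\<bar> \<le> C" "anh_Phi R C \<le> M" "1 \<le> M"
  shows "R \<le> sqrt (3 * C * ln M)"
proof (cases "R \<le> 0")
  case True
  have "0 \<le> 3 * C * ln M"
    using assms by simp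
  with True show ?thesis
    by (meson order_trans real_sqrt_ge_zero)
next
  case False
  then have C: "0 < C"
    using assms(1) by simp
  have "exp (R\<^sup>2 / (3 * C)) \<le> M"
    using False assms(2) by (simp add: anh_Phi_eq max_def)
  then have "R\<^sup>2 / (3 * C) \<le> ln M"
    using assms(3) by (simp add: ln_ge_iff)
  then have "R\<^sup>2 \<le> 3 * C * ln M"
    using C by (simp add: divide_le_eq mult.commute)
  then show ?thesis
    by (rule real_le_rsqrt)
qed

section \<open>Online gradient descent\<close>

lemma convex_on_diff_le_gradient:
  fixes F :: "'a::euclidean_space \<Rightarrow> real"
  assumes "convex Om" "convex_on Om F"
    and deriv: "(F has_derivative (\<lambda>h. d \<bullet> h)) (at w within Om)"
    and "w \<in> Om" "u \<in> Om"
  shows "F w - F u \<le> d \<bullet> (w - u)"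
proof -
  define l where "l = (\<lambda>t::real. w + t *\<^sub>R (u - w))"
  have l_eq: "l t = (1 - t) *\<^sub>R w + t *\<^sub>R u" for t
    by (simp add: l_def algebra_simps)
  have "l ` {0..1} \<subseteq> Om"
    using assms by (auto simp: l_eq intro!: convexD_alt)
  then have "(F has_derivative (\<lambda>h. d \<bullet> h)) (at (l 0) within l ` {0..1})"
    using has_derivative_subset[OF deriv] by (simp add: l_def)
  moreover have "(l has_derivative (\<lambda>t. t *\<^sub>R (u - w))) (at 0 within {0..1})"
    unfolding l_def by (auto intro!: derivative_eq_intros)
  ultimately have "((\<lambda>t. F (l t)) has_derivative (\<lambda>t. d \<bullet> (t *\<^sub>R (u - w)))) (at 0 within {0..1})"
    using has_derivative_in_compose by blast
  moreover have "(\<lambda>t. d \<bullet> (t *\<^sub>R (u - w))) = (*) (d \<bullet> (u - w))"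
    by (auto simp: fun_eq_iff)
  ultimately have "((\<lambda>t. F (l t)) has_field_derivative (d \<bullet> (u - w))) (at 0 within {0..1})"
    by (simp add: has_field_derivative_def)
  then have "((\<lambda>t. (F (l t) - F (l 0)) / (t - 0)) \<longlongrightarrow> d \<bullet> (u - w)) (at 0 within {0..1})"
    by (simp add: has_field_derivative_iff)
  moreover have "eventually (\<lambda>t. (F (l t) - F (l 0)) / (t - 0) \<le> F u - F w) (at 0 within {0..1})"
    unfolding eventually_at_filter
  proof (intro always_eventually allI impI)
    fix t :: real
    assume "t \<noteq> 0" "t \<in> {0..1}"
    then have t: "0 < t" "t \<le> 1" by auto
    have "F (l t) \<le> (1 - t) * F w + t * F u"
      unfolding l_eq using assms t by (intro convex_onD) auto
    then have "F (l t) - F (l 0) \<le> t * (F u - F w)"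
      by (simp add: l_def algebra_simps)
    then show "(F (l t) - F (l 0)) / (t - 0) \<le> F u - F w"
      using t by (simp add: divide_le_eq mult.commute)
  qed
  moreover have "\<not> trivial_limit (at (0::real) within {0..1})"
    by (simp add: at_within_Icc_at_right)
  ultimately have "d \<bullet> (u - w) \<le> F u - F w"
    by (rule tendsto_upperbound)
  then show ?thesis
    by (simp add: inner_diff_right)
qed

lemma ogd_mem:
  assumes "closed Om" "x0 \<in> Om"
  shows "ogd Om g eta x0 s n \<in> Om"
  using assms by (induction n) (auto intro!: closest_point_in_set)

lemma norm_sq_diff_le:
  fixes x y :: "'a::real_normed_vector"
  assumes "norm x \<le> D" "norm y \<le> D"
  shows "(norm x)\<^sup>2 - (norm y)\<^sup>2 \<le> 2 * D * norm (x - y)"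
proof -
  have "(norm x)\<^sup>2 - (norm y)\<^sup>2 = (norm x - norm y) * (norm x + norm y)"
    by (simp add: power2_eq_square algebra_simps)
  also have "\<dots> \<le> norm (x - y) * (2 * D)"
  proof (cases "norm y \<le> norm x")
    case True
    then show ?thesis
      using assms norm_triangle_ineq2[of x y] by (intro mult_mono) auto
  next
    case False
    then have "(norm x - norm y) * (norm x + norm y) \<le> 0"
      by (intro mult_nonpos_nonneg) auto
    also have "0 \<le> norm (x - y) * (2 * D)"
      using order_trans[OF norm_ge_zero assms(1)] by simp
    finally show ?thesis .
  qed
  finally show ?thesis by (simp add: mult_ac)
qed

lemma norm_closest_point_step_le:
  fixes a d v :: "'a::euclidean_space"
  assumes "convex Om" "closed Om" "v \<in> Om"
  shows "(norm (closest_point Om (a - d) - v))\<^sup>2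
    \<le> (norm (a - v))\<^sup>2 - 2 * (d \<bullet> (a - v)) + (norm d)\<^sup>2"
proof -
  have "norm (closest_point Om (a - d) - v) \<le> norm ((a - v) - d)"
    using closest_point_lipschitz[OF assms(1,2), of "a - d" v] closest_point_self[OF assms(3)]
      assms(3)
    by (auto simp: dist_norm algebra_simps)
  then have "(norm (closest_point Om (a - d) - v))\<^sup>2 \<le> (norm ((a - v) - d))\<^sup>2"
    by (intro power_mono) auto
  also have "\<dots> = (norm (a - v))\<^sup>2 - 2 * (d \<bullet> (a - v)) + (norm d)\<^sup>2"
    by (simp only: power2_norm_eq_inner inner_diff_left inner_diff_right)
      (simp add: inner_commute power2_eq_square algebra_simps)
  finally show ?thesis .
qed

locale oco =
  fixes Om :: "'a::euclidean_space set" and f :: "nat \<Rightarrow> 'a \<Rightarrow> real" and g :: "nat \<Rightarrow> 'a \<Rightarrow> 'a"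
    and D G :: real
  assumes Om_convex: "convex Om" and Om_closed: "closed Om"
    and D_pos: "0 < D" and G_pos: "0 < G"
    and diameter: "\<forall>x\<in>Om. \<forall>y\<in>Om. norm (x - y) \<le> D"
    and f_convex: "\<forall>t\<ge>1. convex_on Om (f t)"
    and f_deriv: "\<forall>t\<ge>1. \<forall>w\<in>Om. (f t has_derivative (\<lambda>h. g t w \<bullet> h)) (at w within Om)"
    and g_bound: "\<forall>t\<ge>1. \<forall>w\<in>Om. norm (g t w) \<le> G"
    and f_range: "\<forall>t\<ge>1. \<forall>w\<in>Om. 0 \<le> f t w \<and> f t w \<le> 1"
begin

lemma ogd_step_le:
  assumes t: "1 \<le> t" and eta: "0 < eta" and a: "a \<in> Om" and v: "v \<in> Om" and v': "v' \<in> Om"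
  defines "b \<equiv> closest_point Om (a - eta *\<^sub>R g t a)"
  shows "f t a - f t v \<le> ((norm (a - v))\<^sup>2 - (norm (b - v'))\<^sup>2) / (2 * eta)
           + D * norm (v' - v) / eta + eta * G\<^sup>2 / 2"
proof -
  have b: "b \<in> Om"
    unfolding b_def using Om_closed a by (auto intro: closest_point_in_set)
  have grad: "f t a - f t v \<le> g t a \<bullet> (a - v)"
    using f_convex f_deriv t a v by (intro convex_on_diff_le_gradient[OF Om_convex]) auto
  have "(norm (b - v))\<^sup>2
      \<le> (norm (a - v))\<^sup>2 - 2 * ((eta *\<^sub>R g t a) \<bullet> (a - v)) + (norm (eta *\<^sub>R g t a))\<^sup>2"
    unfolding b_def using Om_convex Om_closed v by (rule norm_closest_point_step_le)
  also have "\<dots> \<le> (norm (a - v))\<^sup>2 - 2 * eta * (g t a \<bullet> (a - v)) + eta\<^sup>2 * G\<^sup>2"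
    using g_bound t a eta by (simp add: power_mult_distrib mult_left_mono power_mono)
  finally have descent: "2 * eta * (g t a \<bullet> (a - v))
      \<le> (norm (a - v))\<^sup>2 - (norm (b - v))\<^sup>2 + eta\<^sup>2 * G\<^sup>2"
    by simp
  have "(norm (b - v'))\<^sup>2 - (norm (b - v))\<^sup>2 \<le> 2 * D * norm ((b - v') - (b - v))"
    using diameter b v v' by (intro norm_sq_diff_le) auto
  then have drift: "(norm (b - v'))\<^sup>2 - (norm (b - v))\<^sup>2 \<le> 2 * D * norm (v' - v)"
    by (simp add: norm_minus_commute)
  have "g t a \<bullet> (a - v)
      \<le> ((norm (a - v))\<^sup>2 - (norm (b - v'))\<^sup>2 + 2 * D * norm (v' - v) + eta\<^sup>2 * G\<^sup>2) / (2 * eta)"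
    using descent drift eta by (simp add: field_simps)
  also have "\<dots> = ((norm (a - v))\<^sup>2 - (norm (b - v'))\<^sup>2) / (2 * eta)
      + D * norm (v' - v) / eta + eta * G\<^sup>2 / 2"
    using eta by (simp add: field_simps power2_eq_square)
  finally show ?thesis
    using grad by linarith
qed

lemma ogd_dynamic_regret:
  assumes s: "1 \<le> s" and eta: "0 < eta" and x0: "x0 \<in> Om" and u: "\<forall>n\<le>L. u (s + n) \<in> Om"
  shows "(\<Sum>n<L. f (s + n) (ogd Om g eta x0 s n) - f (s + n) (u (s + n)))
    \<le> (D\<^sup>2 + 2 * D * (\<Sum>n<L. norm (u (s + n + 1) - u (s + n)))) / (2 * eta) + eta * G\<^sup>2 * real L / 2"
proof -
  define x where "x = ogd Om g eta x0 s"
  define dist2 where "dist2 n = (norm (x n - u (s + n)))\<^sup>2" for n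
  have x: "x n \<in> Om" for n
    unfolding x_def by (rule ogd_mem[OF Om_closed x0])
  have "f (s + n) (x n) - f (s + n) (u (s + n)) \<le> (dist2 n - dist2 (Suc n)) / (2 * eta)
      + D * norm (u (s + n + 1) - u (s + n)) / eta + eta * G\<^sup>2 / 2" if "n < L" for n
    using ogd_step_le[of "s + n" eta "x n" "u (s + n)" "u (s + n + 1)"] s eta x that
      u[rule_format, of n] u[rule_format, of "Suc n"]
    by (simp add: dist2_def x_def)
  then have "(\<Sum>n<L. f (s + n) (x n) - f (s + n) (u (s + n)))
      \<le> (\<Sum>n<L. (dist2 n - dist2 (Suc n)) / (2 * eta)
             + D * norm (u (s + n + 1) - u (s + n)) / eta + eta * G\<^sup>2 / 2)"
    by (intro sum_mono) auto
  also have "\<dots> = (dist2 0 - dist2 L) / (2 * eta)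
      + D * (\<Sum>n<L. norm (u (s + n + 1) - u (s + n))) / eta + eta * G\<^sup>2 * real L / 2"
    by (simp add: sum.distrib sum_lessThan_telescope' flip: sum_divide_distrib sum_distrib_left)
  also have "\<dots> \<le> (D\<^sup>2 + 2 * D * (\<Sum>n<L. norm (u (s + n + 1) - u (s + n)))) / (2 * eta)
      + eta * G\<^sup>2 * real L / 2"
  proof -
    have "dist2 0 \<le> D\<^sup>2"
      unfolding dist2_def using diameter x u by (intro power_mono) auto
    moreover have "0 \<le> dist2 L"
      by (simp add: dist2_def)
    ultimately have "(dist2 0 - dist2 L) / (2 * eta) \<le> D\<^sup>2 / (2 * eta)"
      using eta by (intro divide_right_mono) auto
    then show ?thesis
      using eta by (simp add: add_divide_distrib)
  qed
  finally show ?thesis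
    by (simp add: x_def)
qed

end

section \<open>Ader\<close>

lemma ln_sum_exp_le_hoeffding:
  fixes p l :: "'b \<Rightarrow> real"
  assumes "finite S" and p: "\<forall>m\<in>S. 0 \<le> p m" and p_sum: "(\<Sum>m\<in>S. p m) = 1"
    and l: "\<forall>m\<in>S. 0 \<le> l m \<and> l m \<le> 1" and a: "0 \<le> a"
  shows "ln (\<Sum>m\<in>S. p m * exp (- a * l m)) \<le> - a * (\<Sum>m\<in>S. p m * l m) + a\<^sup>2 / 8"
proof -
  define \<mu> where "\<mu> = (\<Sum>m\<in>S. p m * l m)"
  have "\<mu> \<le> (\<Sum>m\<in>S. p m)"
    unfolding \<mu>_def using p l by (intro sum_mono) (auto intro: mult_right_le_one_le)
  then have \<mu>: "\<mu> \<le> 1"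
    using p_sum by simp
  have "exp (- a * l m) \<le> (1 - l m) + l m * exp (- a)" if "m \<in> S" for m
    using convex_onD[OF exp_convex, of "l m" 0 "- a"] l that by (simp add: mult.commute)
  then have "(\<Sum>m\<in>S. p m * exp (- a * l m)) \<le> (\<Sum>m\<in>S. p m * ((1 - l m) + l m * exp (- a)))"
    using p by (intro sum_mono mult_left_mono) auto
  also have "\<dots> = (\<Sum>m\<in>S. p m) - \<mu> + \<mu> * exp (- a)"
    by (simp add: \<mu>_def algebra_simps sum.distrib sum_subtractf sum_distrib_left sum_distrib_right)
  also have "\<dots> = exp (- a) * (1 + (1 - \<mu>) * (exp a - 1))"
    using p_sum by (simp add: exp_minus field_simps)
  finally have upper: "(\<Sum>m\<in>S. p m * exp (- a * l m)) \<le> exp (- a) * (1 + (1 - \<mu>) * (exp a - 1))" .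
  have "exp (- a) = (\<Sum>m\<in>S. p m * exp (- a))"
    using p_sum by (simp flip: sum_distrib_right)
  also have "\<dots> \<le> (\<Sum>m\<in>S. p m * exp (- a * l m))"
    using p l a by (intro sum_mono mult_left_mono) (auto simp: mult_left_le)
  finally have pos: "0 < (\<Sum>m\<in>S. p m * exp (- a * l m))"
    using exp_gt_zero[of "- a"] by linarith
  have "0 < 1 + (1 - \<mu>) * (exp a - 1)"
    using \<mu> a by (intro add_pos_nonneg) auto
  then have "ln (\<Sum>m\<in>S. p m * exp (- a * l m)) \<le> ln (exp (- a) * (1 + (1 - \<mu>) * (exp a - 1)))"
    using upper pos by simp
  also have "\<dots> = - a + ln (1 + (1 - \<mu>) * (exp a - 1))"
    using \<open>0 < 1 + (1 - \<mu>) * (exp a - 1)\<close> by (simp add: ln_mult)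
  also have "\<dots> \<le> - a * \<mu> + a\<^sup>2 / 8"
    using Hoeffdings_lemma_aux[of a "1 - \<mu>"] a \<mu> by (simp add: algebra_simps)
  finally show ?thesis
    unfolding \<mu>_def .
qed

lemma sum_inverse_mult_Suc: "(\<Sum>m=1..N. 1 / (real m * (real m + 1))) = real N / (real N + 1)"
proof (induction N)
  case (Suc N)
  then have "(\<Sum>m=1..Suc N. 1 / (real m * (real m + 1)))
      = real N / (real N + 1) + 1 / ((real N + 1) * (real N + 2))"
    by (simp add: add_ac)
  also have "\<dots> = real (Suc N) / (real (Suc N) + 1)"
    by (simp add: field_simps) (smt (verit) of_nat_0_le_iff mult_nonneg_nonneg)
  finally show ?case .
qed simp

lemma ader_N_ge_1: "1 \<le> ader_N L"
  by (simp add: ader_N_def)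

lemma ader_p_pos: "0 < m \<Longrightarrow> 0 < ader_p Om g f D G L x0 s n m"
proof (induction n arbitrary: m)
  case 0
  then show ?case by (auto intro!: divide_pos_pos add_pos_nonneg)
next
  case (Suc n)
  have "0 < (\<Sum>m'=1..ader_N L. ader_p Om g f D G L x0 s n m' *
      exp (- ader_alpha L * f (s + n) (ogd Om g (ader_eta D G L m') (x0 m') s n)))"
    using Suc.IH ader_N_ge_1[of L] by (intro sum_pos) auto
  then show ?case
    using Suc by (simp add: Let_def)
qed

lemma sum_ader_p: "(\<Sum>m=1..ader_N L. ader_p Om g f D G L x0 s n m) = 1"
proof (cases n)
  case 0
  have "(\<Sum>m=1..ader_N L. ader_p Om g f D G L x0 s n m)
      = (1 + 1 / real (ader_N L)) * (\<Sum>m=1..ader_N L. 1 / (real m * (real m + 1)))"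
    using 0 by (simp add: sum_distrib_left)
  also have "\<dots> = 1"
  proof -
    have "1 + 1 / real (ader_N L) = (real (ader_N L) + 1) / real (ader_N L)"
      using ader_N_ge_1[of L] by (simp add: field_simps)
    then show ?thesis
      unfolding sum_inverse_mult_Suc using ader_N_ge_1[of L] by simp
  qed
  finally show ?thesis .
next
  case (Suc n')
  have "0 < (\<Sum>m'=1..ader_N L. ader_p Om g f D G L x0 s n' m' *
      exp (- ader_alpha L * f (s + n') (ogd Om g (ader_eta D G L m') (x0 m') s n')))"
    using ader_N_ge_1[of L] by (intro sum_pos mult_pos_pos ader_p_pos exp_gt_zero) auto
  then show ?thesis
    using Suc by (simp add: Let_def flip: sum_divide_distrib)
qed

lemma ader_p_0_ge:
  assumes "0 < k"
  shows "1 / (real k + 1)\<^sup>2 \<le> ader_p Om g f D G L x0 s 0 k"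
proof -
  have "1 / (real k + 1)\<^sup>2 \<le> 1 / (real k * (real k + 1))"
    using assms by (intro divide_left_mono) (auto simp: power2_eq_square)
  also have "\<dots> \<le> ader_p Om g f D G L x0 s 0 k"
    using assms by (auto intro!: divide_right_mono)
  finally show ?thesis .
qed

lemma minus_ln_ader_p_0_le:
  assumes "0 < k"
  shows "- ln (ader_p Om g f D G L x0 s 0 k) \<le> 2 * ln (real k + 1)"
proof -
  have "- (2 * ln (real k + 1)) = ln (1 / (real k + 1)\<^sup>2)"
    by (simp add: ln_div ln_realpow)
  also have "\<dots> \<le> ln (ader_p Om g f D G L x0 s 0 k)"
    by (rule ln_mono[OF ader_p_0_ge[OF assms]]) simp
  finally show ?thesis by linarith
qed

context oco
begin

lemma ader_out_mem:
  assumes "\<forall>m. x0 m \<in> Om"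
  shows "ader_out Om g f D G L x0 s n \<in> Om"
  unfolding ader_out_def using assms sum_ader_p ogd_mem[OF Om_closed]
  by (intro convex_sum[OF _ Om_convex]) (auto intro!: less_imp_le[OF ader_p_pos])

lemma f_ader_out_le:
  assumes "\<forall>m. x0 m \<in> Om" "1 \<le> t"
  shows "f t (ader_out Om g f D G L x0 s n)
    \<le> (\<Sum>m=1..ader_N L. ader_p Om g f D G L x0 s n m * f t (ogd Om g (ader_eta D G L m) (x0 m) s n))"
  unfolding ader_out_def using assms f_convex ader_N_ge_1[of L] sum_ader_p ogd_mem[OF Om_closed]
  by (intro convex_on_sum) (auto intro!: less_imp_le[OF ader_p_pos])

lemma ln_ader_p_Suc_ge:
  fixes n :: nat
  assumes x0: "\<forall>m. x0 m \<in> Om" and s: "1 \<le> s" and k: "0 < k" and L: "0 < L"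
  defines "loss \<equiv> \<lambda>m. f (s + n) (ogd Om g (ader_eta D G L m) (x0 m) s n)"
  shows "ln (ader_p Om g f D G L x0 s n k) - ader_alpha L * loss k
      + ader_alpha L * (\<Sum>m=1..ader_N L. ader_p Om g f D G L x0 s n m * loss m)
      - (ader_alpha L)\<^sup>2 / 8
    \<le> ln (ader_p Om g f D G L x0 s (Suc n) k)"
proof -
  define a where "a = ader_alpha L"
  define p where "p = ader_p Om g f D G L x0 s n"
  define e where "e m = p m * exp (- a * loss m)" for m
  have p_pos: "0 < p m" if "0 < m" for m
    unfolding p_def using that by (rule ader_p_pos)
  have "0 < (\<Sum>m=1..ader_N L. e m)"
    using ader_N_ge_1[of L] p_pos by (intro sum_pos) (auto simp: e_def)
  then have "ln (ader_p Om g f D G L x0 s (Suc n) k)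
      = ln (p k) - a * loss k - ln (\<Sum>m=1..ader_N L. e m)"
    using p_pos[OF k] by (simp add: p_def e_def a_def loss_def Let_def ln_div ln_mult)
  moreover have "ln (\<Sum>m=1..ader_N L. e m) \<le> - a * (\<Sum>m=1..ader_N L. p m * loss m) + a\<^sup>2 / 8"
    unfolding e_def using f_range s ogd_mem[OF Om_closed] x0 L sum_ader_p p_pos
    by (intro ln_sum_exp_le_hoeffding)
      (auto simp: a_def ader_alpha_def p_def loss_def intro: less_imp_le)
  ultimately show ?thesis
    by (simp add: a_def p_def)
qed

lemma ader_hedge_regret:
  assumes x0: "\<forall>m. x0 m \<in> Om" and s: "1 \<le> s" and k: "k \<in> {1..ader_N L}" and L: "0 < L"
  defines "loss \<equiv> \<lambda>n m. f (s + n) (ogd Om g (ader_eta D G L m) (x0 m) s n)"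
  shows "ader_alpha L * ((\<Sum>n<T. \<Sum>m=1..ader_N L. ader_p Om g f D G L x0 s n m * loss n m)
      - (\<Sum>n<T. loss n k))
    \<le> - ln (ader_p Om g f D G L x0 s 0 k) + real T * (ader_alpha L)\<^sup>2 / 8"
proof -
  define a where "a = ader_alpha L"
  define p where "p = ader_p Om g f D G L x0 s"
  have log_weight: "ln (p 0 k) - a * (\<Sum>n<T. loss n k) + a * (\<Sum>n<T. \<Sum>m=1..ader_N L. p n m * loss n m)
      - real T * a\<^sup>2 / 8 \<le> ln (p T k)" for T
  proof (induction T)
    case (Suc T)
    have "ln (p T k) - a * loss T k + a * (\<Sum>m=1..ader_N L. p T m * loss T m) - a\<^sup>2 / 8
        \<le> ln (p (Suc T) k)"
      using ln_ader_p_Suc_ge[OF x0 s _ L, of k T] k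
      unfolding a_def p_def loss_def by (simp del: ader_p.simps)
    with Suc.IH show ?case
      unfolding sum.lessThan_Suc of_nat_Suc by (simp add: field_simps)
  qed simp
  have "p T k \<le> (\<Sum>m=1..ader_N L. p T m)"
    using k by (intro member_le_sum) (auto simp: p_def intro!: less_imp_le[OF ader_p_pos])
  then have "p T k \<le> 1"
    using sum_ader_p[of Om g f D G L x0 s T] by (simp add: p_def)
  moreover have "0 < p T k"
    using k by (simp add: p_def ader_p_pos)
  ultimately have "ln (p T k) \<le> 0"
    by simp
  with log_weight[of T] show ?thesis
    by (simp add: a_def p_def algebra_simps sum_subtractf)
qed

lemma ader_regret_le_instance:
  assumes x0: "\<forall>m. x0 m \<in> Om" and s: "1 \<le> s" and L: "0 < L" and k: "k \<in> {1..ader_N (real L)}"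
  shows "(\<Sum>n<L. f (s + n) (ader_out Om g f D G (real L) x0 s n))
      - (\<Sum>n<L. f (s + n) (ogd Om g (ader_eta D G (real L) k) (x0 k) s n))
    \<le> sqrt (2 * real L) / 4 * (1 + 2 * ln (real k + 1))"
proof -
  define a where "a = ader_alpha (real L)"
  define c where "c = sqrt (2 * real L) / 4"
  define loss where "loss n m = f (s + n) (ogd Om g (ader_eta D G (real L) m) (x0 m) s n)" for n m
  define mix
    where "mix = (\<Sum>n<L. \<Sum>m=1..ader_N (real L). ader_p Om g f D G (real L) x0 s n m * loss n m)"
  have a: "0 < a"
    using L by (simp add: a_def ader_alpha_def)
  have "a * c = sqrt (8 / real L * (2 * real L)) / 4"
    unfolding a_def c_def ader_alpha_def real_sqrt_mult by simp
  also have "8 / real L * (2 * real L) = 4\<^sup>2"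
    using L by simp
  finally have ac: "a * c = 1"
    by simp
  have La: "real L * a\<^sup>2 / 8 = 1"
    using L by (simp add: a_def ader_alpha_def)
  have jensen: "(\<Sum>n<L. f (s + n) (ader_out Om g f D G (real L) x0 s n)) \<le> mix"
    unfolding mix_def loss_def using x0 s by (intro sum_mono f_ader_out_le) auto
  have "a * (mix - (\<Sum>n<L. loss n k))
      \<le> - ln (ader_p Om g f D G (real L) x0 s 0 k) + real L * a\<^sup>2 / 8"
    unfolding a_def mix_def loss_def using L by (intro ader_hedge_regret[OF x0 s k]) simp
  also have "\<dots> \<le> 2 * ln (real k + 1) + 1"
    using minus_ln_ader_p_0_le[of k Om g f D G "real L" x0 s] k La by fastforce
  also have "\<dots> = a * (c * (1 + 2 * ln (real k + 1)))"
    by (simp add: ac flip: mult.assoc)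
  finally have "mix - (\<Sum>n<L. loss n k) \<le> c * (1 + 2 * ln (real k + 1))"
    using a by simp
  with jensen show ?thesis
    by (simp add: c_def loss_def)
qed

end

lemma div_add_mult_le_three_sqrt:
  fixes A B eta :: real
  assumes B: "0 < B" and eta: "0 < eta" and lower: "B * eta\<^sup>2 \<le> A" and upper: "A \<le> 4 * B * eta\<^sup>2"
  shows "A / eta + B * eta \<le> 3 * sqrt (A * B)"
proof -
  define x where "x = B * eta"
  define s where "s = sqrt (A * B)"
  have x: "0 < x"
    using B eta by (simp add: x_def)
  have "x\<^sup>2 \<le> A * B" "A * B \<le> (2 * x)\<^sup>2"
    using mult_right_mono[OF lower, of B] mult_right_mono[OF upper, of B] B
    by (simp_all add: x_def power2_eq_square mult_ac)
  then have "x \<le> s" "s \<le> 2 * x"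
    using x by (auto simp: s_def real_le_rsqrt intro: real_le_lsqrt)
  then have "0 \<le> (s - x) * (2 * x - s)"
    by simp
  then have "s\<^sup>2 + 2 * x\<^sup>2 \<le> 3 * s * x"
    by (simp add: power2_eq_square algebra_simps)
  then have "s\<^sup>2 + x\<^sup>2 \<le> 3 * s * x"
    using zero_le_power2[of x] by linarith
  moreover have "s\<^sup>2 = A * B"
    using order_trans[OF zero_le_power2 \<open>x\<^sup>2 \<le> A * B\<close>] by (simp add: s_def)
  moreover have "A / eta + B * eta = (A * B + x\<^sup>2) / x"
    using B eta by (simp add: x_def field_simps power2_eq_square)
  ultimately show ?thesis
    using x by (simp add: s_def divide_le_eq mult.commute mult.left_commute)
qed

lemma four_power_floor_half_log2:
  fixes z :: real
  assumes "1 \<le> z"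
  defines "m \<equiv> nat \<lfloor>log 2 z / 2\<rfloor>"
  shows "4 ^ m \<le> z" and "z < 4 ^ (m + 1)"
proof -
  have z: "0 < z" "0 \<le> log 2 z"
    using assms by auto
  have "real m = real_of_int \<lfloor>log 2 z / 2\<rfloor>"
    using z by (simp add: m_def)
  then have m: "real m \<le> log 2 z / 2" "log 2 z / 2 < real m + 1"
    by linarith+
  have four: "(4::real) ^ n = 2 powr (real n * 2)" for n
  proof -
    have "(4::real) ^ n = 2 ^ (2 * n)"
      by (simp add: power_mult)
    also have "\<dots> = 2 powr (real n * 2)"
      by (simp add: powr_realpow[symmetric] mult.commute)
    finally show ?thesis .
  qed
  show "4 ^ m \<le> z"
    unfolding four using m z by (simp add: le_log_iff)
  show "z < 4 ^ (m + 1)"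
    unfolding four using m z by (simp add: log_less_iff algebra_simps)
qed

lemma nat_floor_half_log2_le_ader_N:
  assumes "1 \<le> z" "z \<le> 1 + 4 * L / 7"
  shows "nat \<lfloor>log 2 z / 2\<rfloor> + 1 \<le> ader_N L"
proof -
  have "real_of_int \<lfloor>log 2 z / 2\<rfloor> \<le> real_of_int \<lceil>log 2 (1 + 4 * L / 7) / 2\<rceil>"
    using assms of_int_floor_le[of "log 2 z / 2"] le_of_int_ceiling[of "log 2 (1 + 4 * L / 7) / 2"]
    by (smt (verit) divide_right_mono log_le_cancel_iff)
  then show ?thesis
    by (simp add: ader_N_def nat_mono)
qed

lemma ogd_bound_at_ader_eta:
  fixes D G P :: real
  assumes D: "0 < D" and G: "0 < G" and L: "0 < L" and P: "0 \<le> P"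
    and lower: "4 ^ m \<le> 1 + 4 * P / (7 * D)" and upper: "1 + 4 * P / (7 * D) \<le> 4 ^ (m + 1)"
  defines "eta \<equiv> ader_eta D G L (m + 1)"
  shows "(D\<^sup>2 + 2 * D * P) / (2 * eta) + eta * G\<^sup>2 * L / 2
    \<le> 3 * G / 4 * sqrt (2 * L * (7 * D\<^sup>2 + 4 * D * P))"
proof -
  define Q where "Q = 7 * D\<^sup>2 + 4 * D * P"
  define A where "A = Q / 4"
  define B where "B = G\<^sup>2 * L / 2"
  have eta: "0 < eta"
    using D G L by (simp add: eta_def ader_eta_def)
  have B: "0 < B"
    using G L by (simp add: B_def)
  define z where "z = 1 + 4 * P / (7 * D)"
  have Q: "Q = 7 * D\<^sup>2 * z"
    using D by (simp add: Q_def z_def field_simps power2_eq_square)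
  have "(2::real) ^ (m * 2) = 4 ^ m"
    by (subst mult.commute) (simp add: power_mult)
  then have "B * eta\<^sup>2 = 7 * D\<^sup>2 * 4 ^ m / 4"
    using G L by (simp add: B_def eta_def ader_eta_def power_mult_distrib power_divide
        power_mult[symmetric] field_simps)
  moreover have "7 * D\<^sup>2 * 4 ^ m \<le> 7 * D\<^sup>2 * z" "7 * D\<^sup>2 * z \<le> 7 * D\<^sup>2 * (4 * 4 ^ m)"
    using lower upper by (intro mult_left_mono; simp add: z_def)+
  ultimately have "B * eta\<^sup>2 \<le> A" "A \<le> 4 * B * eta\<^sup>2"
    unfolding A_def Q by linarith+
  then have "A / eta + B * eta \<le> 3 * sqrt (A * B)"
    by (intro div_add_mult_le_three_sqrt B eta)
  moreover have "(D\<^sup>2 + 2 * D * P) / (2 * eta) \<le> A / eta"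
  proof -
    have "(D\<^sup>2 + 2 * D * P) / 2 \<le> A"
      by (simp add: A_def Q_def)
    then have "(D\<^sup>2 + 2 * D * P) / 2 / eta \<le> A / eta"
      using eta by (intro divide_right_mono) auto
    then show ?thesis
      by simp
  qed
  moreover have "3 * sqrt (A * B) = 3 * G / 4 * sqrt (2 * L * (7 * D\<^sup>2 + 4 * D * P))"
  proof -
    have "A * B = (G / 4)\<^sup>2 * (2 * L * Q)"
      by (simp add: A_def B_def power2_eq_square)
    then show ?thesis
      using G by (simp add: real_sqrt_mult Q_def)
  qed
  moreover have "eta * G\<^sup>2 * L / 2 = B * eta"
    by (simp add: B_def)
  ultimately show ?thesis
    by linarith
qed

context oco
begin

lemma ader_dynamic_regret:
  assumes x0: "\<forall>m. x0 m \<in> Om" and s: "1 \<le> s" and L: "0 < L" and u: "\<forall>n\<le>L. u (s + n) \<in> Om"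
  defines "P \<equiv> \<Sum>n<L. norm (u (s + n + 1) - u (s + n))"
  shows "(\<Sum>n<L. f (s + n) (ader_out Om g f D G (real L) x0 s n) - f (s + n) (u (s + n)))
    \<le> 3 * G / 4 * sqrt (2 * real L * (7 * D\<^sup>2 + 4 * D * P))
      + sqrt (2 * real L) / 4
        * (1 + 2 * ln (real_of_int (\<lfloor>log 2 (1 + 4 * P / (7 * D)) / 2\<rfloor> + 1) + 1))"
proof -
  define z where "z = 1 + 4 * P / (7 * D)"
  define m where "m = nat \<lfloor>log 2 z / 2\<rfloor>"
  define eta where "eta = ader_eta D G (real L) (m + 1)"
  have P: "0 \<le> P" "P \<le> real L * D"
  proof -
    show "0 \<le> P"
      by (simp add: P_def sum_nonneg)
    have "norm (u (s + n + 1) - u (s + n)) \<le> D" if "n < L" for n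
      using diameter u[rule_format, of n] u[rule_format, of "Suc n"] that by simp
    then have "P \<le> (\<Sum>n<L. D)"
      unfolding P_def by (intro sum_mono) auto
    then show "P \<le> real L * D"
      by simp
  qed
  have z: "1 \<le> z" "z \<le> 1 + 4 * real L / 7"
    using P D_pos by (auto simp: z_def field_simps)
  have k: "real_of_int (\<lfloor>log 2 z / 2\<rfloor> + 1) = real (m + 1)"
    using z by (simp add: m_def)
  have eta: "0 < eta"
    using D_pos G_pos L by (simp add: eta_def ader_eta_def)
  have "(\<Sum>n<L. f (s + n) (ader_out Om g f D G (real L) x0 s n))
      - (\<Sum>n<L. f (s + n) (ogd Om g eta (x0 (m + 1)) s n))
      \<le> sqrt (2 * real L) / 4 * (1 + 2 * ln (real (m + 1) + 1))"
    unfolding eta_def using nat_floor_half_log2_le_ader_N[OF z] L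
    by (intro ader_regret_le_instance[OF x0 s]) (auto simp: m_def)
  moreover have "(\<Sum>n<L. f (s + n) (ogd Om g eta (x0 (m + 1)) s n) - f (s + n) (u (s + n)))
      \<le> (D\<^sup>2 + 2 * D * P) / (2 * eta) + eta * G\<^sup>2 * real L / 2"
    unfolding P_def using x0 by (intro ogd_dynamic_regret[OF s eta _ u]) auto
  moreover have "(D\<^sup>2 + 2 * D * P) / (2 * eta) + eta * G\<^sup>2 * real L / 2
      \<le> 3 * G / 4 * sqrt (2 * real L * (7 * D\<^sup>2 + 4 * D * P))"
    using four_power_floor_half_log2[OF z(1)] D_pos G_pos L P
    unfolding eta_def m_def z_def by (intro ogd_bound_at_ader_eta) auto
  ultimately show ?thesis
    unfolding sum_subtractf z_def[symmetric] k by linarith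
qed

end

section \<open>Geometric covering intervals\<close>

lemma int_start_ge_1: "J \<in> covering \<Longrightarrow> 1 \<le> int_start J"
  by (auto simp: covering_def int_start_def)

lemma int_end_plus_1: "int_end J + 1 = int_start J + int_len J"
  by (simp add: int_end_def int_start_def int_len_def algebra_simps)

lemma int_start_le_int_end: "int_start J \<le> int_end J"
proof -
  have "0 < int_len J"
    by (simp add: int_len_def)
  with int_end_plus_1[of J] show ?thesis
    by linarith
qed

lemma covering_started_subset:
  "{K \<in> covering. int_start K \<le> j} \<subseteq> {0..nat \<lfloor>log 2 (real j)\<rfloor>} \<times> {1..j}"
proof clarify
  fix k i
  assume K: "(k, i) \<in> covering" "int_start (k, i) \<le> j"
  then have i: "1 \<le> i" "i * 2 ^ k \<le> j"
    by (auto simp: covering_def int_start_def)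
  then have "2 ^ k \<le> j" "i \<le> j"
    by (metis dual_order.trans mult_le_mono1 mult_1 mult.commute, simp add: le_trans[OF _ i(2)])
  then have "real k \<le> log 2 (real j)"
    using le_log2_of_power by blast
  with i \<open>i \<le> j\<close> show "k \<in> {0..nat \<lfloor>log 2 (real j)\<rfloor>} \<and> i \<in> {1..j}"
    by (auto simp: le_nat_floor)
qed

lemma finite_covering_started: "finite {K \<in> covering. int_start K \<le> j}"
  by (rule finite_subset[OF covering_started_subset]) auto

lemma card_covering_started_bounds:
  assumes "1 \<le> j"
  shows "1 \<le> card {K \<in> covering. int_start K \<le> j}"
    and "real (card {K \<in> covering. int_start K \<le> j}) \<le> real j * (1 + log 2 (real j))"
proof -
  let ?S = "{K \<in> covering. int_start K \<le> j}"
  have "(0, 1) \<in> ?S"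
    using assms by (simp add: covering_def int_start_def)
  then show "1 \<le> card ?S"
    using finite_covering_started card_gt_0_iff[of ?S] by (auto simp: Suc_le_eq)
  have "card ?S \<le> (nat \<lfloor>log 2 (real j)\<rfloor> + 1) * j"
    using card_mono[OF _ covering_started_subset, of j] by (simp add: card_cartesian_product)
  moreover have "real (nat \<lfloor>log 2 (real j)\<rfloor>) \<le> log 2 (real j)"
    using assms by simp
  ultimately have "real (card ?S) \<le> (log 2 (real j) + 1) * real j"
    by (smt (verit) of_nat_1 of_nat_add of_nat_le_iff of_nat_mult mult_right_mono of_nat_0_le_iff)
  then show "real (card ?S) \<le> real j * (1 + log 2 (real j))"
    by (simp add: algebra_simps)
qed

lemma ln_card_covering_started_le:
  assumes j: "1 \<le> j" and B: "1 \<le> B"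
  shows "ln (real (card {K \<in> covering. int_start K \<le> j}) * B)
    \<le> ln (real j) + ln (1 + log 2 (real j)) + ln B"
proof -
  let ?S = "{K \<in> covering. int_start K \<le> j}"
  have S: "1 \<le> real (card ?S)" "real (card ?S) \<le> real j * (1 + log 2 (real j))"
    using card_covering_started_bounds[OF j] by simp_all
  have "0 \<le> log 2 (real j)"
    using j by simp
  then have lg: "0 < 1 + log 2 (real j)"
    by linarith
  have "ln (real (card ?S)) \<le> ln (real j * (1 + log 2 (real j)))"
    using S by simp
  also have "\<dots> = ln (real j) + ln (1 + log 2 (real j))"
    using j by (intro ln_mult_pos lg) simp
  finally show ?thesis
    using S B by (simp add: ln_mult_pos)
qed

lemma finite_active: "finite (active t)"
  by (rule finite_subset[OF _ finite_covering_started[of t]]) (auto simp: active_def)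

lemma sum_interval_eq_sum_lessThan:
  "(\<Sum>t=int_start J..int_end J. h t) = (\<Sum>n<int_len J. h (int_start J + n))"
proof -
  have "{int_start J..int_end J} = {0 + int_start J..<int_len J + int_start J}"
    using int_end_plus_1[of J] by auto
  then show ?thesis
    using sum.shift_bounds_nat_ivl[of h 0 "int_start J" "int_len J"]
    by (simp add: atLeast0LessThan add.commute)
qed

section \<open>AdaNormalHedge over the sleeping experts\<close>

lemma length_aoa_hist: "length (aoa_hist f E n) = n"
  by (induction n) (auto simp: Let_def)

lemma nth_aoa_hist: "u < n \<Longrightarrow> aoa_hist f E n ! u = aoa_hist f E (Suc u) ! u"
  by (induction n) (auto simp: Let_def nth_append length_aoa_hist less_Suc_eq)

lemma aoa_play_cong:
  assumes "\<And>J u. J \<in> active t \<Longrightarrow> int_start J \<le> u \<Longrightarrow> u < t \<Longrightarrow> w1 u = w2 u"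
  shows "aoa_play f E w1 t = aoa_play f E w2 t"
proof -
  have "aoa_R f E w1 t J = aoa_R f E w2 t J" "aoa_C f E w1 t J = aoa_C f E w2 t J"
    if "J \<in> active t" for J
    unfolding aoa_R_def aoa_C_def using assms that by (auto intro!: sum.cong)
  then show ?thesis
    unfolding aoa_play_def Let_def by (auto intro!: sum.cong)
qed

lemma aoa_eq_aoa_play:
  assumes "1 \<le> t"
  shows "aoa Om g f D G X0 t = aoa_play f (expert_out Om g f D G X0) (aoa Om g f D G X0) t"
proof -
  define E where "E = expert_out Om g f D G X0"
  obtain m where m: "t = Suc m"
    using assms by (cases t) auto
  have "aoa Om g f D G X0 t = aoa_play f E (\<lambda>u. aoa_hist f E m ! (u - 1)) t"
    by (simp add: aoa_def E_def m Let_def nth_append length_aoa_hist)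
  also have "\<dots> = aoa_play f E (aoa Om g f D G X0) t"
  proof (rule aoa_play_cong)
    fix J u
    assume "J \<in> active t" "int_start J \<le> u" "u < t"
    moreover have "1 \<le> int_start J"
      using \<open>J \<in> active t\<close> unfolding active_def by (blast intro: int_start_ge_1)
    ultimately show "aoa_hist f E m ! (u - 1) = aoa Om g f D G X0 u"
      using nth_aoa_hist[of "u - 1" m f E] by (simp add: aoa_def E_def m)
  qed
  finally show ?thesis
    by (simp add: E_def)
qed

lemma aoa_C_nonneg: "0 \<le> aoa_C f E w t J"
  by (simp add: aoa_C_def sum_nonneg)

lemma abs_aoa_R_le: "\<bar>aoa_R f E w t J\<bar> \<le> aoa_C f E w t J"
  unfolding aoa_R_def aoa_C_def by (rule sum_abs)

lemma aoa_R_C_Suc: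
  assumes "int_start J \<le> t"
  shows "aoa_R f E w (Suc t) J = aoa_R f E w t J + (f t (w t) - f t (E t J))"
    and "aoa_C f E w (Suc t) J = aoa_C f E w t J + \<bar>f t (w t) - f t (E t J)\<bar>"
  using assms by (simp_all add: aoa_R_def aoa_C_def)

lemma aoa_R_C_before_start:
  assumes "t \<le> int_start J"
  shows "aoa_R f E w t J = 0" and "aoa_C f E w t J = 0"
  using assms by (simp_all add: aoa_R_def aoa_C_def)

text \<open>If all weights vanish, division by zero makes the play \<open>0\<close>; hence \<open>0 \<in> Om\<close>.\<close>
lemma aoa_play_mem:
  assumes "convex Om" "0 \<in> Om" "\<forall>K. E t K \<in> Om"
  shows "aoa_play f E w t \<in> Om"
proof -
  define p where "p K = anh_w (aoa_R f E w t K) (aoa_C f E w t K)" for K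
  define Z where "Z = (\<Sum>K\<in>active t. p K)"
  have p: "0 \<le> p K" for K
    unfolding p_def by (rule anh_w_nonneg[OF aoa_C_nonneg])
  show ?thesis
  proof (cases "Z = 0")
    case True
    then show ?thesis
      using assms(2) by (simp add: aoa_play_def Let_def p_def[symmetric] Z_def[symmetric])
  next
    case False
    then have "0 < Z"
      using p by (simp add: Z_def order_less_le sum_nonneg)
    then have "(\<Sum>K\<in>active t. (p K / Z) *\<^sub>R E t K) \<in> Om"
      using assms p by (intro convex_sum finite_active)
        (auto simp: Z_def simp flip: sum_divide_distrib)
    then show ?thesis
      by (simp add: aoa_play_def Let_def p_def[symmetric] Z_def[symmetric])
  qed
qed

lemma aoa_play_weighted_regret_nonpos:
  assumes "convex Om" "convex_on Om F" "\<forall>K. E t K \<in> Om"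
  shows "(\<Sum>K\<in>active t. anh_w (aoa_R f E w t K) (aoa_C f E w t K)
      * (F (aoa_play f E w t) - F (E t K))) \<le> 0"
proof -
  define p where "p K = anh_w (aoa_R f E w t K) (aoa_C f E w t K)" for K
  define Z where "Z = (\<Sum>K\<in>active t. p K)"
  have p: "0 \<le> p K" for K
    unfolding p_def by (rule anh_w_nonneg[OF aoa_C_nonneg])
  have sum_eq: "(\<Sum>K\<in>active t. p K * (F (aoa_play f E w t) - F (E t K)))
      = Z * F (aoa_play f E w t) - (\<Sum>K\<in>active t. p K * F (E t K))"
    by (simp add: Z_def algebra_simps sum_subtractf sum_distrib_right)
  show ?thesis
  proof (cases "Z = 0")
    case True
    then have "\<forall>K\<in>active t. p K = 0"
      using p finite_active by (simp add: Z_def sum_nonneg_eq_0_iff)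
    then show ?thesis
      by (simp add: p_def)
  next
    case False
    then have Z: "0 < Z"
      using p by (simp add: Z_def order_less_le sum_nonneg)
    have "F (aoa_play f E w t) \<le> (\<Sum>K\<in>active t. (p K / Z) * F (E t K))"
      unfolding aoa_play_def Let_def p_def[symmetric] Z_def[symmetric]
      using assms p Z False
      by (intro convex_on_sum finite_active) (auto simp: Z_def simp flip: sum_divide_distrib)
    then have "Z * F (aoa_play f E w t) \<le> (\<Sum>K\<in>active t. p K * F (E t K))"
      using Z by (simp add: sum_divide_distrib[symmetric] pos_le_divide_eq mult.commute)
    then show ?thesis
      using sum_eq by (simp add: p_def)
  qed
qed

text \<open>The two properties of AOA on which the analysis of AdaNormalHedge relies.\<close>
locale anh_sleeping_experts =
  fixes f :: "nat \<Rightarrow> 'a \<Rightarrow> real" and E :: "nat \<Rightarrow> nat \<times> nat \<Rightarrow> 'a" and W :: "nat \<Rightarrow> 'a"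
  assumes instant_regret_bound: "1 \<le> t \<Longrightarrow> \<bar>f t (W t) - f t (E t K)\<bar> \<le> 1"
    and weighted_instant_regret_nonpos: "1 \<le> t \<Longrightarrow>
      (\<Sum>K\<in>active t. anh_w (aoa_R f E W t K) (aoa_C f E W t K) * (f t (W t) - f t (E t K))) \<le> 0"
begin

text \<open>Frozen after the end of \<open>K\<close>'s interval, so that the sum over all experts started so far
  is nonincreasing.\<close>
definition potential :: "nat \<Rightarrow> nat \<times> nat \<Rightarrow> real" where
  "potential t K = (let t' = min t (int_end K + 1) in
     anh_Phi (aoa_R f E W t' K) (aoa_C f E W t' K) - 3 / 2 * anh_G (aoa_C f E W t' K))"

lemma aoa_C_le_elapsed:
  assumes "K \<in> covering"
  shows "aoa_C f E W t K \<le> real (t - int_start K)"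
proof -
  have "aoa_C f E W t K \<le> real (card {int_start K..<t}) * 1"
    unfolding aoa_C_def using instant_regret_bound int_start_ge_1[OF assms]
    by (intro sum_bounded_above) auto
  then show ?thesis
    by simp
qed

lemma potential_before_start:
  assumes "K \<in> covering" "t \<le> int_start K"
  shows "potential t K = 1"
proof -
  have "min t (int_end K + 1) \<le> int_start K"
    using assms by simp
  then show ?thesis
    by (simp add: potential_def Let_def aoa_R_C_before_start anh_Phi_def anh_G_def)
qed

lemma potential_Suc_le:
  assumes t: "1 \<le> t" and K: "K \<in> covering"
  shows "potential (Suc t) K \<le> potential t K + (if K \<in> active t then
    anh_w (aoa_R f E W t K) (aoa_C f E W t K) * (f t (W t) - f t (E t K)) else 0)"
proof (cases "K \<in> active t")
  case True
  define r where "r = f t (W t) - f t (E t K)"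
  define R where "R = aoa_R f E W t K"
  define C where "C = aoa_C f E W t K"
  have start: "int_start K \<le> t" "t \<le> int_end K"
    using True by (auto simp: active_def)
  have r: "\<bar>r\<bar> \<le> 1"
    unfolding r_def using instant_regret_bound[OF t] .
  define y where "y = \<bar>r\<bar> / (C + 1)"
  have "anh_Phi (R + r) (C + \<bar>r\<bar>) \<le> anh_Phi R C + anh_w R C * r + 3 * \<bar>r\<bar> / (2 * (C + 1))"
    unfolding R_def C_def by (rule anh_Phi_step_le[OF aoa_C_nonneg abs_aoa_R_le r])
  then have "anh_Phi (R + r) (C + \<bar>r\<bar>) \<le> anh_Phi R C + anh_w R C * r + 3 / 2 * y"
    by (simp add: y_def)
  moreover have "anh_G C + y \<le> anh_G (C + \<bar>r\<bar>)"
    unfolding C_def y_def using r by (intro anh_G_add_le aoa_C_nonneg) auto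
  moreover have "potential (Suc t) K = anh_Phi (R + r) (C + \<bar>r\<bar>) - 3 / 2 * anh_G (C + \<bar>r\<bar>)"
    using start by (simp add: potential_def aoa_R_C_Suc R_def C_def r_def)
  moreover have "potential t K = anh_Phi R C - 3 / 2 * anh_G C"
    using start by (simp add: potential_def R_def C_def)
  ultimately have "potential (Suc t) K \<le> potential t K + anh_w R C * r"
    by linarith
  with True show ?thesis
    by (simp add: R_def C_def r_def)
next
  case False
  then have "t < int_start K \<or> int_end K < t"
    using K by (auto simp: active_def)
  then have "potential (Suc t) K = potential t K"
  proof
    assume "t < int_start K"
    then show ?thesis
      using K by (simp add: potential_before_start)
  next
    assume "int_end K < t"
    then show ?thesis
      by (simp add: potential_def)
  qed
  with False show ?thesis
    by simp
qed

lemma sum_potential_le_card: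
  assumes "1 \<le> t" "t \<le> Suc j"
  defines "S \<equiv> {K \<in> covering. int_start K \<le> j}"
  shows "(\<Sum>K\<in>S. potential t K) \<le> real (card S)"
  using assms(1,2)
proof (induction t rule: nat_induct_at_least)
  case base
  have "potential 1 K = 1" if "K \<in> S" for K
    using that int_start_ge_1 by (simp add: S_def potential_before_start)
  then show ?case
    by simp
next
  case (Suc t)
  have act: "active t \<subseteq> S"
    using Suc.prems by (auto simp: S_def active_def)
  have "(\<Sum>K\<in>S. potential (Suc t) K) \<le> (\<Sum>K\<in>S. potential t K + (if K \<in> active t then
      anh_w (aoa_R f E W t K) (aoa_C f E W t K) * (f t (W t) - f t (E t K)) else 0))"
    using Suc.hyps by (intro sum_mono potential_Suc_le) (auto simp: S_def)
  also have "\<dots> = (\<Sum>K\<in>S. potential t K)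
      + (\<Sum>K\<in>active t. anh_w (aoa_R f E W t K) (aoa_C f E W t K) * (f t (W t) - f t (E t K)))"
    using act finite_covering_started[of j]
    by (simp add: S_def sum.distrib sum.If_cases Int_absorb1)
  also have "\<dots> \<le> real (card S)"
    using Suc weighted_instant_regret_nonpos[OF Suc.hyps(1)] by simp
  finally show ?case .
qed

lemma anh_Phi_end_le:
  assumes J: "J \<in> covering"
  defines "j \<equiv> int_end J"
  defines "S \<equiv> {K \<in> covering. int_start K \<le> j}"
  shows "anh_Phi (aoa_R f E W (Suc j) J) (aoa_C f E W (Suc j) J)
    \<le> real (card S) * (5 + 3 * ln (1 + real j)) / 2"
proof -
  define t where "t K = min (Suc j) (int_end K + 1)" for K
  have j: "1 \<le> j" "int_start J \<le> j"
    using int_start_ge_1[OF J] int_start_le_int_end[of J] by (auto simp: j_def)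
  have S: "finite S" "J \<in> S"
    using finite_covering_started J j(2) by (auto simp: S_def)
  have Phi_pos: "0 \<le> anh_Phi (aoa_R f E W (t K) K) (aoa_C f E W (t K) K)" for K
    by (rule order_trans[OF zero_le_one anh_Phi_ge_1[OF aoa_C_nonneg]])
  have G_le: "anh_G (aoa_C f E W (t K) K) \<le> 1 + ln (1 + real j)" if "K \<in> S" for K
  proof -
    have "aoa_C f E W (t K) K \<le> real (t K - int_start K)"
      using that by (intro aoa_C_le_elapsed) (simp add: S_def)
    also have "\<dots> \<le> real j"
      using int_start_ge_1[of K] that by (simp add: t_def S_def)
    finally have "aoa_C f E W (t K) K \<le> real j" .
    then have "1 + ln (1 + aoa_C f E W (t K) K) \<le> 1 + ln (1 + real j)"
      using aoa_C_nonneg[of f E W "t K" K] by simp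
    then show ?thesis
      using anh_G_le[OF aoa_C_nonneg] by (rule order_trans[rotated])
  qed
  have "t J = Suc j"
    by (simp add: t_def j_def)
  have "anh_Phi (aoa_R f E W (t J) J) (aoa_C f E W (t J) J)
      \<le> (\<Sum>K\<in>S. anh_Phi (aoa_R f E W (t K) K) (aoa_C f E W (t K) K))"
    by (rule member_le_sum[OF S(2) _ S(1)]) (rule Phi_pos)
  then have "anh_Phi (aoa_R f E W (Suc j) J) (aoa_C f E W (Suc j) J)
      \<le> (\<Sum>K\<in>S. anh_Phi (aoa_R f E W (t K) K) (aoa_C f E W (t K) K))"
    unfolding \<open>t J = Suc j\<close> .
  also have "\<dots> = (\<Sum>K\<in>S. potential (Suc j) K) + (\<Sum>K\<in>S. 3 / 2 * anh_G (aoa_C f E W (t K) K))"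
    by (simp add: potential_def t_def sum.distrib[symmetric])
  also have "\<dots> \<le> real (card S) + (\<Sum>K\<in>S. 3 / 2 * (1 + ln (1 + real j)))"
    using sum_potential_le_card[of "Suc j" j, folded S_def] j
    by (intro add_mono sum_mono mult_left_mono G_le) auto
  also have "\<dots> = real (card S) * (5 + 3 * ln (1 + real j)) / 2"
    by (simp add: field_simps)
  finally show ?thesis .
qed

lemma aoa_meta_regret:
  assumes J: "J \<in> covering"
  defines "j \<equiv> int_end J"
  shows "(\<Sum>t=int_start J..j. f t (W t) - f t (E t J))
    \<le> sqrt (3 * real (int_len J) * (1 + ln (real j) + ln (1 + log 2 (real j))
                                     + ln ((5 + 3 * ln (1 + real j)) / 2)))"
proof -
  define S where "S = {K \<in> covering. int_start K \<le> j}"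
  define B where "B = (5 + 3 * ln (1 + real j)) / 2"
  define c' where "c' = 1 + ln (real j) + ln (1 + log 2 (real j)) + ln B"
  have j: "1 \<le> j"
    using int_start_ge_1[OF J] int_start_le_int_end[of J] by (simp add: j_def)
  have B: "1 \<le> B"
    using j by (simp add: B_def)
  have M: "1 \<le> real (card S) * B"
    using mult_mono[OF _ B] card_covering_started_bounds(1)[OF j] by (simp add: S_def)
  have ln_M: "ln (real (card S) * B) \<le> c'"
    using ln_card_covering_started_le[OF j B] by (simp add: S_def c'_def)
  have "(\<Sum>t=int_start J..j. f t (W t) - f t (E t J)) = aoa_R f E W (Suc j) J"
    by (simp add: aoa_R_def atLeastLessThanSuc_atLeastAtMost)
  also have "\<dots> \<le> sqrt (3 * aoa_C f E W (Suc j) J * ln (real (card S) * B))"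
  proof (rule le_sqrt_of_anh_Phi_le[OF abs_aoa_R_le])
    show "anh_Phi (aoa_R f E W (Suc j) J) (aoa_C f E W (Suc j) J) \<le> real (card S) * B"
      using anh_Phi_end_le[OF J] by (simp add: S_def B_def j_def)
    show "1 \<le> real (card S) * B"
      using M .
  qed
  also have "\<dots> \<le> sqrt (3 * real (int_len J) * c')"
  proof -
    have "aoa_C f E W (Suc j) J \<le> real (int_len J)"
      using aoa_C_le_elapsed[OF J, of "Suc j"] int_end_plus_1[of J] by (simp add: j_def)
    moreover have "0 \<le> ln (real (card S) * B)"
      using M by simp
    ultimately show ?thesis
      using ln_M aoa_C_nonneg[of f E W "Suc j" J] by (intro real_sqrt_le_mono mult_mono) auto
  qed
  finally show ?thesis
    by (simp add: c'_def B_def)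
qed

end

context oco
begin

lemma expert_dynamic_regret:
  assumes X0: "\<forall>J m. X0 J m \<in> Om" and J: "J \<in> covering"
    and u: "\<forall>t\<in>{int_start J..int_end J + 1}. u t \<in> Om"
  defines "P \<equiv> \<Sum>t=int_start J..int_end J. norm (u (t + 1) - u t)"
  shows "(\<Sum>t=int_start J..int_end J. f t (expert_out Om g f D G X0 t J) - f t (u t))
    \<le> 3 * G / 4 * sqrt (2 * real (int_len J) * (7 * D\<^sup>2 + 4 * D * P))
      + sqrt (2 * real (int_len J)) / 4
        * (1 + 2 * ln (real_of_int (\<lfloor>log 2 (1 + 4 * P / (7 * D)) / 2\<rfloor> + 1) + 1))"
proof -
  have "\<forall>n\<le>int_len J. u (int_start J + n) \<in> Om"
    using u int_end_plus_1[of J] by auto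
  moreover have "0 < int_len J"
    by (simp add: int_len_def)
  ultimately show ?thesis
    using ader_dynamic_regret[of "X0 J" "int_start J" "int_len J" u] X0 int_start_ge_1[OF J]
    by (simp add: sum_interval_eq_sum_lessThan expert_out_def P_def add.assoc)
qed

lemma anh_sleeping_experts_aoa:
  assumes "0 \<in> Om" and X0: "\<forall>J m. X0 J m \<in> Om"
  shows "anh_sleeping_experts f (expert_out Om g f D G X0) (aoa Om g f D G X0)"
proof -
  have E: "\<forall>K. expert_out Om g f D G X0 t K \<in> Om" for t
    using X0 by (simp add: expert_out_def ader_out_mem)
  have W: "aoa Om g f D G X0 t \<in> Om" if "1 \<le> t" for t
    using aoa_play_mem[where E = "expert_out Om g f D G X0", OF Om_convex assms(1) E[of t]]
      aoa_eq_aoa_play[OF that, of Om g f D G X0]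
    by simp
  show ?thesis
  proof
    fix t :: nat and K
    assume t: "1 \<le> t"
    then show "\<bar>f t (aoa Om g f D G X0 t) - f t (expert_out Om g f D G X0 t K)\<bar> \<le> 1"
      using f_range E W[OF t] by (smt (verit))
  next
    fix t :: nat
    assume t: "1 \<le> t"
    then show "(\<Sum>K\<in>active t. anh_w (aoa_R f (expert_out Om g f D G X0) (aoa Om g f D G X0) t K)
        (aoa_C f (expert_out Om g f D G X0) (aoa Om g f D G X0) t K)
        * (f t (aoa Om g f D G X0 t) - f t (expert_out Om g f D G X0 t K))) \<le> 0"
      using aoa_play_weighted_regret_nonpos[where E = "expert_out Om g f D G X0", OF Om_convex _ E[of t]]
        f_convex
        aoa_eq_aoa_play[OF t, of Om g f D G X0]
      by simp
  qed
qed

end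

theorem lemma9:
  fixes Om :: "'a::euclidean_space set"
    and f :: "nat \<Rightarrow> 'a \<Rightarrow> real" and g :: "nat \<Rightarrow> 'a \<Rightarrow> 'a"
    and D G :: real and X0 :: "nat \<times> nat \<Rightarrow> nat \<Rightarrow> 'a"
    and J :: "nat \<times> nat" and u :: "nat \<Rightarrow> 'a"
  assumes "convex Om" and "closed Om"
    and "0 \<in> Om" and "D > 0" and "G > 0"
    and "\<forall>x\<in>Om. \<forall>y\<in>Om. norm (x - y) \<le> D"
    and "\<forall>t\<ge>1. convex_on Om (f t)"
    and "\<forall>t\<ge>1. \<forall>w\<in>Om. (f t has_derivative (\<lambda>h. g t w \<bullet> h)) (at w within Om)"
    and "\<forall>t\<ge>1. \<forall>w\<in>Om. norm (g t w) \<le> G"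
    and "\<forall>t\<ge>1. \<forall>w\<in>Om. 0 \<le> f t w \<and> f t w \<le> 1"
    and "\<forall>J' m. X0 J' m \<in> Om"
    and "J \<in> covering"
    and "\<forall>t\<in>{int_start J..int_end J + 1}. u t \<in> Om"
  shows "let i = int_start J; j = int_end J; L = real (int_len J);
             P = (\<Sum>t=i..j. norm (u (t + 1) - u t));
             kJ = \<lfloor>log 2 (1 + 4 * P / (7 * D)) / 2\<rfloor> + 1;
             c' = 1 + ln (real j) + ln (1 + log 2 (real j)) + ln ((5 + 3 * ln (1 + real j)) / 2)
         in (\<Sum>t=i..j. f t (aoa Om g f D G X0 t)) - (\<Sum>t=i..j. f t (u t))
            \<le> sqrt (3 * L * c') + 3 * G / 4 * sqrt (2 * L * (7 * D\<^sup>2 + 4 * D * P))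
               + sqrt (2 * L) / 4 * (1 + 2 * ln (real_of_int kJ + 1))"
proof -
  interpret oco Om f g D G
    using assms by unfold_locales auto
  interpret anh_sleeping_experts f "expert_out Om g f D G X0" "aoa Om g f D G X0"
    using anh_sleeping_experts_aoa assms by blast
  have "(\<Sum>t=int_start J..int_end J. f t (aoa Om g f D G X0 t))
        - (\<Sum>t=int_start J..int_end J. f t (u t))
      = (\<Sum>t=int_start J..int_end J. f t (aoa Om g f D G X0 t) - f t (expert_out Om g f D G X0 t J))
        + (\<Sum>t=int_start J..int_end J. f t (expert_out Om g f D G X0 t J) - f t (u t))"
    by (simp add: sum_subtractf)
  with aoa_meta_regret[OF assms(12)] expert_dynamic_regret[OF assms(11-13)] show ?thesis
    unfolding Let_def by linarith
qed

end
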